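(* For any instance of MPMD or MBPMD, the connection cost $\mathrm{dist}(\mathrm{pos}(u),\mathrm{pos}(v))$ of every matching edge $(u,v)$ created by Greedy Dual is at most $2\sum_{S\subseteq V}\mathrm{sur}(S)\,y_S(T)$, where $V$ is the set of all requests and $T$ is the time at which Greedy Dual matches the last request.
   Context: Problem (MPMD / MBPMD). Let $(\mathcal{X},\mathrm{dist})$ be a metric space. An instance consists of $2m$ requests $u_1,\dots,u_{2m}$. Each request $u$ is a triple $(\mathrm{pos}(u),\mathrm{atime}(u),\mathrm{sgn}(u))$, where $\mathrm{pos}(u)\in\mathcal{X}$ is its location and $\mathrm{atime}(u)\ge0$ is its arrival time, with arrival times nondecreasing. In MPMD, $\mathrm{sgn}(u)=0$ for all requests. In MBPMD, exactly $m$ requests have sign $+1$ and $m$ have sign $-1$. At time $\tau$, an algorithm may match two arrived, unmatched requests $u,v$ with $\mathrm{sgn}(u)=-\mathrm{sgn}(v)$, at cost $\mathrm{dist}(\mathrm{pos}(u),\mathrm{pos}(v))$ (connection cost) plus $(\tau-\mathrm{atime}(u))+(\tau-\mathrm{atime}(v))$ (waiting costs). All requests must eventually be matched. Notation. Edges are unordered pairs $\{u,v\}$ of distinct requests with $\mathrm{sgn}(u)=-\mathrm{sgn}(v)$. For a set $S$ of requests, $\delta(S)$ is the set of edges with exactly one endpoint in $S$. In MPMD, $\mathrm{sur}(S)=|S|\bmod 2$; in MBPMD, $\mathrm{sur}(S)=|\sum_{u\in S}\mathrm{sgn}(u)|$. For an edge $e=(u,v)$, $\mathrm{cost}(e)=\mathrm{dist}(\mathrm{pos}(u),\mathrm{pos}(v))+|\mathrm{atime}(u)-\mathrm{atime}(v)|$.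 Algorithm Greedy Dual (GD). GD maintains a dual variable $y_S\ge0$ for every set $S$ of already-arrived requests; $y_S(\tau)$ denotes its value at time $\tau$. It also maintains a partition of the arrived requests into active sets, with $\mathcal{A}(u)$ denoting the active set containing $u$. An active set is growing if it contains at least one free request, and non-growing otherwise. - When a request $u$ arrives, $\mathcal{A}(u)\leftarrow\{u\}$ becomes a new active set, and $y_S\leftarrow 0$ for every new set $S$ containing $u$. - Tight-constraint event: while there is an edge $e=(u,v)$ between arrived requests with $\mathcal{A}(u)\neq\mathcal{A}(v)$ and $\sum_{S:\,e\in\delta(S)}y_S=\mathrm{cost}(e)$, GD does the following. It merges the two sets: $S=\mathcal{A}(u)\cup\mathcal{A}(v)$ becomes active and $\mathcal{A}(w)\leftarrow S$ for all $w\in S$, while $\mathcal{A}(u)$ and $\mathcal{A}(v)$ become inactive. It marks the edge $e$. Then, while there are free $u',v'\in S$ with $\mathrm{sgn}(u')=-\mathrm{sgn}(v')$, it matches $u'$ with $v'$ at the current time. - At all other times, $y_S$ increases continuously at rate $1$ (the same rate as time) for every active growing set $S$; all other dual variables stay constant. *)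

theory Defs
  imports Complex_Main
begin

definition instance_ok :: "'r set \<Rightarrow> ('r \<Rightarrow> 'p::metric_space) \<Rightarrow> ('r \<Rightarrow> real) \<Rightarrow> ('r \<Rightarrow> int) \<Rightarrow> bool" where
  "instance_ok V pos atime sg \<longleftrightarrow> finite V \<and> (\<forall>u\<in>V. atime u \<ge> 0) \<and>
     ((\<forall>u\<in>V. sg u = 0) \<and> even (card V) \<comment> \<open>MPMD\<close>
      \<or> (\<forall>u\<in>V. sg u = 1 \<or> sg u = -1) \<and> card {u\<in>V. sg u = 1} = card {u\<in>V. sg u = -1}) \<comment> \<open>MBPMD\<close>"

definition sur :: "'r set \<Rightarrow> ('r \<Rightarrow> int) \<Rightarrow> 'r set \<Rightarrow> real" where
  "sur V sg S = (if \<forall>u\<in>V. sg u = 0 then real (card S mod 2)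
                 else \<bar>\<Sum>u\<in>S. real_of_int (sg u)\<bar>)"

definition is_edge :: "('r \<Rightarrow> int) \<Rightarrow> 'r \<Rightarrow> 'r \<Rightarrow> bool" where
  "is_edge sg u v \<longleftrightarrow> u \<noteq> v \<and> sg u = - sg v"

definition cost :: "('r \<Rightarrow> 'p::metric_space) \<Rightarrow> ('r \<Rightarrow> real) \<Rightarrow> 'r \<Rightarrow> 'r \<Rightarrow> real" where
  "cost pos atime u v = dist (pos u) (pos v) + \<bar>atime u - atime v\<bar>"

definition load :: "'r set \<Rightarrow> ('r set \<Rightarrow> real) \<Rightarrow> 'r \<Rightarrow> 'r \<Rightarrow> real" where
  "load V y u v = (\<Sum>S\<in>{S. S \<subseteq> V \<and> ((u \<in> S) \<noteq> (v \<in> S))}. y S)"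

text \<open>State of Greedy Dual: current time, arrived requests, active sets (a partition of
the arrived requests), dual variables, and the matching edges created so far together
with the time at which they were created.\<close>
record 'r gd_state =
  clock :: real
  arrived :: "'r set"
  act :: "'r set set"
  yv :: "'r set \<Rightarrow> real"
  matches :: "('r \<times> 'r \<times> real) set"

definition gd_init :: "'r gd_state" where
  "gd_init = \<lparr>clock = 0, arrived = {}, act = {}, yv = (\<lambda>_. 0), matches = {}\<rparr>"

definition free :: "'r gd_state \<Rightarrow> 'r \<Rightarrow> bool" where
  "free s u \<longleftrightarrow> u \<in> arrived s \<and> \<not> (\<exists>v t. (u, v, t) \<in> matches s \<or> (v, u, t) \<in> matches s)"

definition actset :: "'r gd_state \<Rightarrow> 'r \<Rightarrow> 'r set" where
  "actset s u = (THE A. A \<in> act s \<and> u \<in> A)"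

definition growing :: "'r gd_state \<Rightarrow> 'r set \<Rightarrow> bool" where
  "growing s A \<longleftrightarrow> (\<exists>u\<in>A. free s u)"

definition tight :: "'r set \<Rightarrow> ('r \<Rightarrow> 'p::metric_space) \<Rightarrow> ('r \<Rightarrow> real) \<Rightarrow> ('r \<Rightarrow> int)
                     \<Rightarrow> 'r gd_state \<Rightarrow> 'r \<Rightarrow> 'r \<Rightarrow> bool" where
  "tight V pos atime sg s u v \<longleftrightarrow> u \<in> arrived s \<and> v \<in> arrived s \<and> is_edge sg u v \<and>
     actset s u \<noteq> actset s v \<and> load V (yv s) u v = cost pos atime u v"

text \<open>One step of Greedy Dual (nondeterministic where the algorithm leaves choices open).\<close>
inductive gd_step :: "'r set \<Rightarrow> ('r \<Rightarrow> 'p::metric_space) \<Rightarrow> ('r \<Rightarrow> real) \<Rightarrow> ('r \<Rightarrow> int)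
                      \<Rightarrow> 'r gd_state \<Rightarrow> 'r gd_state \<Rightarrow> bool"
  for V pos atime sg where
  arrive:
    "\<lbrakk> u \<in> V; u \<notin> arrived s; atime u = clock s \<rbrakk> \<Longrightarrow>
     gd_step V pos atime sg s
       (s\<lparr> arrived := insert u (arrived s), act := insert {u} (act s),
           yv := (\<lambda>S. if u \<in> S then 0 else yv s S) \<rparr>)"
| merge:
    "\<lbrakk> tight V pos atime sg s u v;
       S = actset s u \<union> actset s v;
       \<forall>(a, b)\<in>P. a \<in> S \<and> b \<in> S \<and> a \<noteq> b \<and> sg a = - sg b \<and> free s a \<and> free s b;
       \<forall>(a, b)\<in>P. \<forall>(c, d)\<in>P. (a, b) \<noteq> (c, d) \<longrightarrow> {a, b} \<inter> {c, d} = {};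
       s' = s\<lparr> act := insert S (act s - {actset s u, actset s v}),
               matches := matches s \<union> {(a, b, clock s) | a b. (a, b) \<in> P} \<rparr>;
       \<forall>a\<in>S. \<forall>b\<in>S. a \<noteq> b \<longrightarrow> sg a = - sg b \<longrightarrow> \<not> (free s' a \<and> free s' b) \<rbrakk> \<Longrightarrow>
     gd_step V pos atime sg s s'"
| advance:
    "\<lbrakk> \<tau>' > clock s;
       \<not> (\<exists>u v. tight V pos atime sg s u v);
       \<forall>u\<in>V. atime u < \<tau>' \<longrightarrow> u \<in> arrived s;
       y' = (\<lambda>S. yv s S + (if S \<in> act s \<and> growing s S then \<tau>' - clock s else 0));
       \<forall>u\<in>arrived s. \<forall>v\<in>arrived s. is_edge sg u v \<longrightarrow> actset s u \<noteq> actset s v \<longrightarrow>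
           load V y' u v \<le> cost pos atime u v \<rbrakk> \<Longrightarrow>
     gd_step V pos atime sg s (s\<lparr> clock := \<tau>', yv := y' \<rparr>)"

end

theory Submission
  imports Defs "HOL-Library.Disjoint_Sets"
begin

(* Greedy Dual keeps the arrived requests partitioned into active sets, and every matching
   edge joins two requests of one active set.  Two invariants of the run give the bound.
   First, for x, z in an active set A,
     dist(x, z) <= sum over S <= A of (2 - [x in S] - [z in S]) * y_S.
   When A and B are merged along a tight edge (u, v), the triangle inequality through u and v
   joins the bounds for A and B, because tightness bounds dist(u, v) by the duals of the sets
   containing u or v, and these are exactly the terms the two bounds leave out.
   Second, y_S > 0 only for subsets S of active sets with sur(S) >= 1: S grew only while it
   contained a free request, its matched requests cancel in pairs, and no two of its free
   requests could still be matched with each other.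
   Hence dist(u, v) <= 2 * sum over S <= A of y_S <= 2 * sum over S of sur(S) * y_S. *)

lemma partition_on_the_block:
  assumes "partition_on X P" "x \<in> X"
  shows "(THE B. B \<in> P \<and> x \<in> B) \<in> P" and "x \<in> (THE B. B \<in> P \<and> x \<in> B)"
proof -
  obtain A where A: "A \<in> P" "x \<in> A" using assms partition_onD1 by blast
  then have "(THE B. B \<in> P \<and> x \<in> B) = A"
    using assms(1) by (intro the_equality) (auto simp: partition_on_def disjoint_def)
  then show "(THE B. B \<in> P \<and> x \<in> B) \<in> P" and "x \<in> (THE B. B \<in> P \<and> x \<in> B)"
    using A by simp_all
qed

lemma partition_on_merge:
  assumes "partition_on X P" "A \<in> P" "B \<in> P"
  shows "partition_on X (insert (A \<union> B) (P - {A, B}))"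
unfolding partition_on_def
proof (intro conjI)
  show "\<Union>(insert (A \<union> B) (P - {A, B})) = X"
    using assms partition_onD1 by auto
  show "{} \<notin> insert (A \<union> B) (P - {A, B})"
    using assms partition_onD3 by auto
  have disj: "disjoint P" using assms(1) by (rule partition_onD2)
  then have "disjnt (A \<union> B) q" if "q \<in> P - {A, B}" for q
    using that assms(2,3) unfolding disjnt_Un1 by (auto dest: pairwiseD)
  moreover have "disjoint (P - {A, B})" using disj by (rule pairwise_subset) blast
  ultimately show "disjoint (insert (A \<union> B) (P - {A, B}))"
    by (auto simp: pairwise_insert disjnt_sym)
qed

lemma partition_on_insert_singleton:
  assumes "partition_on X P" "x \<notin> X"
  shows "partition_on (insert x X) (insert {x} P)"
  using assms unfolding partition_on_def disjoint_def by auto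

lemma card_sum_matched_endpoints:
  fixes sg :: "'a \<Rightarrow> 'b::ab_group_add"
  assumes "finite P"
    and opposite: "\<forall>(a, b)\<in>P. a \<noteq> b \<and> sg a = - sg b"
    and disjoint: "\<forall>(a, b)\<in>P. \<forall>(c, d)\<in>P. (a, b) \<noteq> (c, d) \<longrightarrow> {a, b} \<inter> {c, d} = {}"
  shows "card (fst ` P \<union> snd ` P) = 2 * card P" and "(\<Sum>x\<in>fst ` P \<union> snd ` P. sg x) = 0"
proof -
  have inj_fst: "inj_on fst P" and inj_snd: "inj_on snd P"
    using disjoint by (fastforce intro!: inj_onI)+
  have "fst p \<noteq> snd q" if "p \<in> P" "q \<in> P" for p q
    using that opposite disjoint by (cases "p = q"; cases p; cases q) fastforce+
  then have disj: "fst ` P \<inter> snd ` P = {}" by blast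
  show "card (fst ` P \<union> snd ` P) = 2 * card P"
    using card_Un_disjoint[OF _ _ disj] card_image[OF inj_fst] card_image[OF inj_snd] \<open>finite P\<close>
    by simp
  have "(\<Sum>x\<in>fst ` P \<union> snd ` P. sg x) = (\<Sum>x\<in>fst ` P. sg x) + (\<Sum>x\<in>snd ` P. sg x)"
    using sum.union_disjoint[OF _ _ disj] \<open>finite P\<close> by simp
  also have "\<dots> = (\<Sum>p\<in>P. sg (fst p) + sg (snd p))"
    by (simp add: sum.reindex[OF inj_fst] sum.reindex[OF inj_snd] sum.distrib)
  also have "\<dots> = 0"
    using opposite by (intro sum.neutral) auto
  finally show "(\<Sum>x\<in>fst ` P \<union> snd ` P. sg x) = 0" .
qed

(* F marks the free requests: the others are matched among themselves, and no two free
   requests could still be matched with each other. *)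
definition paired_off :: "('r \<Rightarrow> int) \<Rightarrow> ('r \<Rightarrow> bool) \<Rightarrow> 'r set \<Rightarrow> bool" where
  "paired_off sg F A \<longleftrightarrow>
     even (card {x\<in>A. \<not> F x}) \<and> (\<Sum>x\<in>{x\<in>A. \<not> F x}. sg x) = 0 \<and>
     (\<forall>a\<in>A. \<forall>b\<in>A. a \<noteq> b \<longrightarrow> sg a = - sg b \<longrightarrow> \<not> (F a \<and> F b))"

lemma paired_off_cong:
  assumes "\<And>x. x \<in> A \<Longrightarrow> F x = G x"
  shows "paired_off sg F A = paired_off sg G A"
proof -
  have "{x\<in>A. \<not> F x} = {x\<in>A. \<not> G x}" using assms by auto
  then show ?thesis using assms by (auto simp: paired_off_def)
qed

lemma paired_off_singleton:
  assumes "F x"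
  shows "paired_off sg F {x}"
proof -
  have no_unfree: "{y\<in>{x}. \<not> F y} = {}" using assms by auto
  show ?thesis unfolding paired_off_def no_unfree by simp
qed

lemma paired_off_merge:
  assumes "finite A" "finite B" "A \<inter> B = {}" "paired_off sg F A" "paired_off sg F B"
    and R: "R \<subseteq> {x\<in>A \<union> B. F x}" "even (card R)" "(\<Sum>x\<in>R. sg x) = 0"
    and unmatchable:
      "\<forall>a\<in>A \<union> B. \<forall>b\<in>A \<union> B. a \<noteq> b \<longrightarrow> sg a = - sg b \<longrightarrow> \<not> (F a \<and> a \<notin> R \<and> F b \<and> b \<notin> R)"
  shows "paired_off sg (\<lambda>x. F x \<and> x \<notin> R) (A \<union> B)"
proof -
  let ?N = "\<lambda>A. {x\<in>A. \<not> F x}"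
  have split: "{x\<in>A \<union> B. \<not> (F x \<and> x \<notin> R)} = (?N A \<union> ?N B) \<union> R"
    using R(1) by auto
  have fin: "finite (?N A)" "finite (?N B)" "finite R"
    using assms(1,2) finite_subset[OF R(1)] by auto
  have disj: "?N A \<inter> ?N B = {}" "(?N A \<union> ?N B) \<inter> R = {}"
    using assms(3) R(1) by auto
  show ?thesis
    using assms(4,5) R(2,3) unmatchable fin disj
    unfolding paired_off_def split by (simp add: card_Un_disjoint sum.union_disjoint)
qed

lemma sur_nonneg: "0 \<le> sur V sg S"
  by (simp add: sur_def)

lemma one_le_sur_if_free:
  assumes inst: "instance_ok V pos atime sg" and "A \<subseteq> V"
    and paired: "paired_off sg F A" and w: "w \<in> A" "F w"
  shows "1 \<le> sur V sg A"
proof -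
  let ?F = "{x\<in>A. F x}" and ?N = "{x\<in>A. \<not> F x}"
  have "finite A" using inst \<open>A \<subseteq> V\<close> finite_subset unfolding instance_ok_def by blast
  then have fin: "finite ?N" "finite ?F" by auto
  have split: "?N \<union> ?F = A" "?N \<inter> ?F = {}" by auto
  have card_A: "card A = card ?N + card ?F"
    using card_Un_disjoint[OF fin split(2)] split(1) by simp
  have sum_A: "(\<Sum>x\<in>A. sg x) = (\<Sum>x\<in>?N. sg x) + (\<Sum>x\<in>?F. sg x)"
    using sum.union_disjoint[OF fin split(2)] split(1) by simp
  have N: "even (card ?N)" "(\<Sum>x\<in>?N. sg x) = 0"
    and unmatchable: "\<And>a b. a \<in> ?F \<Longrightarrow> b \<in> ?F \<Longrightarrow> a \<noteq> b \<Longrightarrow> sg a \<noteq> - sg b"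
    using paired unfolding paired_off_def by auto
  have "w \<in> ?F" and F_V: "?F \<subseteq> V" using w \<open>A \<subseteq> V\<close> by auto
  show ?thesis
  proof (cases "\<forall>u\<in>V. sg u = 0")
    case True
    have "a = w" if "a \<in> ?F" for a
    proof -
      have "sg a = - sg w" using that \<open>w \<in> ?F\<close> F_V True by (simp add: subset_iff)
      then show "a = w" using unmatchable[OF that \<open>w \<in> ?F\<close>] by auto
    qed
    then have "?F = {w}" using \<open>w \<in> ?F\<close> by blast
    then have "odd (card A)" using card_A N(1) by simp
    then show ?thesis using True by (simp add: sur_def odd_iff_mod_2_eq_one)
  next
    case False
    then have signs: "\<forall>u\<in>V. sg u = 1 \<or> sg u = -1" using inst unfolding instance_ok_def by auto
    have "sg x = sg w" if "x \<in> ?F" for x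
    proof -
      have "sg x \<in> {1, -1}" "sg w \<in> {1, -1}" using that \<open>w \<in> ?F\<close> F_V signs by auto
      then show ?thesis using unmatchable[OF that \<open>w \<in> ?F\<close>] by (cases "x = w") auto
    qed
    then have "(\<Sum>x\<in>A. sg x) = int (card ?F) * sg w"
      using sum_A N(2) by simp
    moreover have "sur V sg A = \<bar>\<Sum>x\<in>A. real_of_int (sg x)\<bar>"
      using False unfolding sur_def by (simp only: if_False)
    ultimately have "sur V sg A = real (card ?F) * \<bar>real_of_int (sg w)\<bar>"
      by (simp flip: of_int_sum add: abs_mult)
    also have "\<bar>real_of_int (sg w)\<bar> = 1" using signs w \<open>A \<subseteq> V\<close> by force
    finally have "sur V sg A = real (card ?F)" by simp
    moreover have "card ?F \<noteq> 0" using fin(2) \<open>w \<in> ?F\<close> by auto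
    ultimately show ?thesis by simp
  qed
qed

definition dual_dist :: "('r set \<Rightarrow> real) \<Rightarrow> 'r set \<Rightarrow> 'r \<Rightarrow> 'r \<Rightarrow> real" where
  "dual_dist y A x z = (\<Sum>S\<in>Pow A. (2 - of_bool (x \<in> S) - of_bool (z \<in> S)) * y S)"

definition reach :: "('r set \<Rightarrow> real) \<Rightarrow> 'r set \<Rightarrow> 'r \<Rightarrow> real" where
  "reach y A x = (\<Sum>S\<in>Pow A. of_bool (x \<in> S) * y S)"

definition dist_bounded :: "('r \<Rightarrow> 'p::metric_space) \<Rightarrow> ('r set \<Rightarrow> real) \<Rightarrow> 'r set \<Rightarrow> bool" where
  "dist_bounded pos y A \<longleftrightarrow> (\<forall>x\<in>A. \<forall>z\<in>A. dist (pos x) (pos z) \<le> dual_dist y A x z)"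

lemma dual_dist_commute: "dual_dist y A x z = dual_dist y A z x"
  unfolding dual_dist_def by (simp add: algebra_simps)

lemma dual_dist_nonneg: "(\<And>S. 0 \<le> y S) \<Longrightarrow> 0 \<le> dual_dist y A x z"
  unfolding dual_dist_def by (intro sum_nonneg mult_nonneg_nonneg) simp_all

lemma dual_dist_mono:
  assumes "\<And>S. S \<subseteq> A \<Longrightarrow> y S \<le> y' S"
  shows "dual_dist y A x z \<le> dual_dist y' A x z"
  unfolding dual_dist_def using assms by (intro sum_mono mult_left_mono) simp_all

lemma dual_dist_subset:
  assumes "A \<subseteq> B" "finite B" "\<And>S. 0 \<le> y S"
  shows "dual_dist y A x z \<le> dual_dist y B x z"
  unfolding dual_dist_def using assms by (intro sum_mono2 mult_nonneg_nonneg) auto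

lemma dual_dist_add_reach:
  assumes "z \<notin> A"
  shows "dual_dist y A x u + reach y A u = dual_dist y A x z"
proof -
  have "z \<notin> S" if "S \<in> Pow A" for S using that assms by auto
  then show ?thesis
    unfolding dual_dist_def reach_def sum.distrib[symmetric]
    by (intro sum.cong) (simp_all add: algebra_simps)
qed

lemma dual_dist_union:
  assumes "finite A" "finite B" "A \<inter> B = {}" "\<And>S. 0 \<le> y S" "y {} = 0"
  shows "dual_dist y A x z + dual_dist y B x z \<le> dual_dist y (A \<union> B) x z"
proof -
  let ?c = "\<lambda>S. (2 - of_bool (x \<in> S) - of_bool (z \<in> S)) * y S"
  have "Pow A \<inter> Pow B = {{}}" using assms(3) by auto
  then have "dual_dist y A x z + dual_dist y B x z = (\<Sum>S\<in>Pow A \<union> Pow B. ?c S)"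
    unfolding dual_dist_def using sum.union_inter[of "Pow A" "Pow B" ?c] assms(1,2,5) by simp
  also have "\<dots> \<le> dual_dist y (A \<union> B) x z"
    unfolding dual_dist_def using assms(1,2,4) by (intro sum_mono2 mult_nonneg_nonneg) auto
  finally show ?thesis .
qed

lemma dist_bounded_singleton:
  assumes "\<And>S. 0 \<le> y S"
  shows "dist_bounded pos y {x}"
  unfolding dist_bounded_def using dual_dist_nonneg[OF assms] by simp

lemma dist_bounded_mono:
  assumes "dist_bounded pos y A" "\<And>S. S \<subseteq> A \<Longrightarrow> y S \<le> y' S"
  shows "dist_bounded pos y' A"
  using assms dual_dist_mono[of A y y'] unfolding dist_bounded_def by (meson order_trans)

lemma dist_bounded_merge:
  fixes pos :: "'r \<Rightarrow> 'p::metric_space"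
  assumes fin: "finite A" "finite B" and disj: "A \<inter> B = {}"
    and y: "\<And>S. 0 \<le> y S" "y {} = 0"
    and bounded: "dist_bounded pos y A" "dist_bounded pos y B"
    and "u \<in> A" "v \<in> B"
    and edge: "dist (pos u) (pos v) \<le> reach y A u + reach y B v"
  shows "dist_bounded pos y (A \<union> B)"
proof -
  have across: "dist (pos x) (pos z) \<le> dual_dist y (A \<union> B) x z" if "x \<in> A" "z \<in> B" for x z
  proof -
    have "z \<notin> A" "x \<notin> B" using that disj by auto
    have "dist (pos x) (pos z) \<le> dist (pos x) (pos u) + dist (pos u) (pos v) + dist (pos v) (pos z)"
      using dist_triangle[of "pos x" "pos z" "pos u"] dist_triangle[of "pos u" "pos z" "pos v"]
      by linarith
    also have "\<dots> \<le> (dual_dist y A x u + reach y A u) + (reach y B v + dual_dist y B v z)"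
      using bounded that \<open>u \<in> A\<close> \<open>v \<in> B\<close> edge unfolding dist_bounded_def by fastforce
    also have "\<dots> = dual_dist y A x z + dual_dist y B x z"
      using dual_dist_add_reach[OF \<open>z \<notin> A\<close>, of y x u] dual_dist_add_reach[OF \<open>x \<notin> B\<close>, of y z v]
      by (simp add: dual_dist_commute)
    also have "\<dots> \<le> dual_dist y (A \<union> B) x z"
      using fin disj y by (rule dual_dist_union)
    finally show ?thesis .
  qed
  have within: "dist (pos x) (pos z) \<le> dual_dist y (A \<union> B) x z"
    if "C = A \<or> C = B" "x \<in> C" "z \<in> C" for C x z
  proof -
    have "dist (pos x) (pos z) \<le> dual_dist y C x z"
      using that bounded unfolding dist_bounded_def by blast
    also have "\<dots> \<le> dual_dist y (A \<union> B) x z"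
      using that fin y(1) by (intro dual_dist_subset) auto
    finally show ?thesis .
  qed
  show ?thesis
    unfolding dist_bounded_def
  proof (intro ballI)
    fix x z assume "x \<in> A \<union> B" "z \<in> A \<union> B"
    then consider "x \<in> A" "z \<in> A" | "x \<in> B" "z \<in> B" | "x \<in> A" "z \<in> B" | "x \<in> B" "z \<in> A"
      by blast
    then show "dist (pos x) (pos z) \<le> dual_dist y (A \<union> B) x z"
    proof cases
      case 4
      then show ?thesis using across[of z x] by (simp add: dist_commute dual_dist_commute)
    qed (use within across in blast)+
  qed
qed

lemma load_le_reach:
  fixes y :: "'r set \<Rightarrow> real"
  assumes "finite V" "disjoint \<A>" and y: "\<And>S. 0 \<le> y S"
    and support: "\<And>S. y S \<noteq> 0 \<Longrightarrow> \<exists>C\<in>\<A>. S \<subseteq> C"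
    and A: "A \<in> \<A>" "A \<subseteq> V" "u \<in> A" and B: "B \<in> \<A>" "B \<subseteq> V" "v \<in> B"
  shows "load V y u v \<le> reach y A u + reach y B v"
proof -
  define g where "g S = of_bool (S \<subseteq> A \<and> u \<in> S) * y S + of_bool (S \<subseteq> B \<and> v \<in> S) * y S" for S
  let ?Sep = "{S. S \<subseteq> V \<and> (u \<in> S) \<noteq> (v \<in> S)}"
  have g_nonneg: "0 \<le> g S" for S unfolding g_def using y[of S] by simp
  have "y S \<le> g S" if "S \<in> ?Sep" for S
  proof (cases "y S = 0")
    case False
    then obtain C where "C \<in> \<A>" "S \<subseteq> C" using support by blast
    moreover have "C = A" if "u \<in> S" "C \<in> \<A>" "S \<subseteq> C"
      using that A \<open>disjoint \<A>\<close> disjointD by blast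
    moreover have "C = B" if "v \<in> S" "C \<in> \<A>" "S \<subseteq> C"
      using that B \<open>disjoint \<A>\<close> disjointD by blast
    ultimately show ?thesis using \<open>S \<in> ?Sep\<close> y[of S] unfolding g_def by auto
  qed (use g_nonneg in simp)
  then have "load V y u v \<le> (\<Sum>S\<in>?Sep. g S)"
    unfolding load_def by (rule sum_mono)
  also have "\<dots> \<le> (\<Sum>S\<in>Pow V. g S)"
    using \<open>finite V\<close> g_nonneg by (intro sum_mono2) auto
  also have "\<dots> = reach y A u + reach y B v"
  proof -
    have "(\<Sum>S\<in>Pow V. of_bool (S \<subseteq> C \<and> x \<in> S) * y S) = reach y C x" if "C \<subseteq> V" for C x
      unfolding reach_def using that \<open>finite V\<close>
      by (intro sum.mono_neutral_cong_right) auto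
    then show ?thesis
      unfolding g_def sum.distrib using A(2) B(2) by simp
  qed
  finally show ?thesis .
qed

lemma dual_dist_le_weighted_sum:
  assumes "finite V" "A \<subseteq> V"
    and y: "\<And>S. 0 \<le> y S" and w: "\<And>S. 0 \<le> w S" "\<And>S. y S \<noteq> 0 \<Longrightarrow> 1 \<le> w S"
  shows "dual_dist y A x z \<le> 2 * (\<Sum>S\<in>Pow V. w S * y S)"
proof -
  have "(2 - of_bool (x \<in> S) - of_bool (z \<in> S)) * y S \<le> 2 * (w S * y S)" for S
  proof -
    have "(2 - of_bool (x \<in> S) - of_bool (z \<in> S)) * y S \<le> 2 * y S"
      using y[of S] by (intro mult_right_mono) auto
    also have "\<dots> \<le> 2 * (w S * y S)"
      using w(2)[of S] y[of S] by (cases "y S = 0") (auto simp: mult_right_mono)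
    finally show ?thesis .
  qed
  then have "dual_dist y A x z \<le> (\<Sum>S\<in>Pow A. 2 * (w S * y S))"
    unfolding dual_dist_def by (rule sum_mono)
  also have "\<dots> \<le> (\<Sum>S\<in>Pow V. 2 * (w S * y S))"
    using assms by (intro sum_mono2 mult_nonneg_nonneg) auto
  finally show ?thesis by (simp add: sum_distrib_left)
qed

lemma free_after_matching:
  "free (s\<lparr>act := \<A>, matches := matches s \<union> {(a, b, \<tau>) | a b. (a, b) \<in> P}\<rparr>) x \<longleftrightarrow>
     free s x \<and> x \<notin> fst ` P \<union> snd ` P"
  unfolding free_def by force

definition gd_invariant :: "'r set \<Rightarrow> ('r \<Rightarrow> 'p::metric_space) \<Rightarrow> ('r \<Rightarrow> int) \<Rightarrow> 'r gd_state \<Rightarrow> bool" where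
  "gd_invariant V pos sg s \<longleftrightarrow>
     arrived s \<subseteq> V \<and> partition_on (arrived s) (act s) \<and>
     (\<forall>a b t. (a, b, t) \<in> matches s \<longrightarrow> (\<exists>A\<in>act s. a \<in> A \<and> b \<in> A)) \<and>
     (\<forall>A\<in>act s. paired_off sg (free s) A \<and> dist_bounded pos (yv s) A) \<and>
     (\<forall>S. 0 \<le> yv s S) \<and>
     (\<forall>S. yv s S \<noteq> 0 \<longrightarrow> S \<noteq> {} \<and> (\<exists>A\<in>act s. S \<subseteq> A) \<and> 1 \<le> sur V sg S)"

lemma gd_invariant_init: "gd_invariant V pos sg gd_init"
  by (simp add: gd_invariant_def gd_init_def partition_on_empty)

lemma gd_invariant_arrive:
  assumes inv: "gd_invariant V pos sg s" and u: "u \<in> V" "u \<notin> arrived s"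
  shows "gd_invariant V pos sg
           (s\<lparr>arrived := insert u (arrived s), act := insert {u} (act s),
              yv := (\<lambda>S. if u \<in> S then 0 else yv s S)\<rparr>)"
    (is "gd_invariant V pos sg ?s")
proof -
  have part: "partition_on (arrived s) (act s)"
    and matched: "\<forall>a b t. (a, b, t) \<in> matches s \<longrightarrow> (\<exists>A\<in>act s. a \<in> A \<and> b \<in> A)"
    and blocks: "\<forall>A\<in>act s. paired_off sg (free s) A \<and> dist_bounded pos (yv s) A"
    using inv unfolding gd_invariant_def by auto
  have fresh: "u \<notin> A" if "A \<in> act s" for A
    using that u(2) partition_onD1[OF part] by blast
  have free_new: "free ?s x \<longleftrightarrow> x = u \<or> free s x" for x
    using matched fresh unfolding free_def by auto
  have "paired_off sg (free ?s) A" if "A \<in> act s" for A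
    using that blocks fresh[OF that] free_new paired_off_cong[of A "free ?s" "free s" sg] by auto
  moreover have "dist_bounded pos (yv ?s) A" if "A \<in> act s" for A
    using blocks that by (rule_tac dist_bounded_mono) (use fresh[OF that] in auto)
  moreover have "paired_off sg (free ?s) {u}" "dist_bounded pos (yv ?s) {u}"
    using inv free_new[of u] unfolding gd_invariant_def
    by (auto intro: paired_off_singleton dist_bounded_singleton)
  ultimately show ?thesis
    using inv u partition_on_insert_singleton[OF part u(2)] unfolding gd_invariant_def by auto
qed

lemma gd_invariant_advance:
  assumes inv: "gd_invariant V pos sg s" and inst: "instance_ok V pos atime sg"
    and "clock s < \<tau>'"
  shows "gd_invariant V pos sg
           (s\<lparr>clock := \<tau>', yv := (\<lambda>S. yv s S + (if S \<in> act s \<and> growing s S then \<tau>' - clock s else 0))\<rparr>)"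
    (is "gd_invariant V pos sg ?s")
proof -
  have part: "partition_on (arrived s) (act s)" and "arrived s \<subseteq> V"
    and blocks: "\<forall>A\<in>act s. paired_off sg (free s) A \<and> dist_bounded pos (yv s) A"
    and y: "\<forall>S. 0 \<le> yv s S"
    and support: "\<forall>S. yv s S \<noteq> 0 \<longrightarrow> S \<noteq> {} \<and> (\<exists>A\<in>act s. S \<subseteq> A) \<and> 1 \<le> sur V sg S"
    using inv unfolding gd_invariant_def by auto
  have free_eq: "free ?s = free s" by (simp add: free_def fun_eq_iff)
  have growing_support: "S \<noteq> {} \<and> (\<exists>A\<in>act s. S \<subseteq> A) \<and> 1 \<le> sur V sg S"
    if "S \<in> act s" "growing s S" for S
  proof -
    obtain w where "w \<in> S" "free s w" using \<open>growing s S\<close> unfolding growing_def by blast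
    moreover have "S \<subseteq> V" using that partition_onD1[OF part] \<open>arrived s \<subseteq> V\<close> by blast
    ultimately show ?thesis
      using that blocks one_le_sur_if_free[OF inst] by blast
  qed
  have "dist_bounded pos (yv ?s) A" if "A \<in> act s" for A
    using blocks that \<open>clock s < \<tau>'\<close> by (rule_tac dist_bounded_mono) auto
  moreover have "yv ?s S \<noteq> 0 \<Longrightarrow> S \<noteq> {} \<and> (\<exists>A\<in>act s. S \<subseteq> A) \<and> 1 \<le> sur V sg S" for S
    using support growing_support by (cases "S \<in> act s \<and> growing s S") auto
  ultimately show ?thesis
    using inv y \<open>clock s < \<tau>'\<close> unfolding gd_invariant_def free_eq by (simp add: add_nonneg_nonneg)
qed

lemma tight_edge_blocks:
  assumes inv: "gd_invariant V pos sg s" and tight: "tight V pos atime sg s u v"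
  shows "actset s u \<in> act s" "u \<in> actset s u" "actset s v \<in> act s" "v \<in> actset s v"
    and "actset s u \<inter> actset s v = {}"
proof -
  have part: "partition_on (arrived s) (act s)" using inv unfolding gd_invariant_def by blast
  have "u \<in> arrived s" "v \<in> arrived s" "actset s u \<noteq> actset s v"
    using tight unfolding tight_def by auto
  then show "actset s u \<in> act s" "u \<in> actset s u" "actset s v \<in> act s" "v \<in> actset s v"
    and "actset s u \<inter> actset s v = {}"
    using partition_on_the_block[OF part] partition_onD2[OF part] disjointD
    unfolding actset_def by blast+
qed

lemma dist_bounded_tight_merge:
  assumes inv: "gd_invariant V pos sg s" and "finite V" and tight: "tight V pos atime sg s u v"
  shows "dist_bounded pos (yv s) (actset s u \<union> actset s v)"
proof -
  let ?A = "actset s u" and ?B = "actset s v"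
  have blocks: "?A \<in> act s" "u \<in> ?A" "?B \<in> act s" "v \<in> ?B" "?A \<inter> ?B = {}"
    using tight_edge_blocks[OF inv tight] by auto
  have part: "partition_on (arrived s) (act s)" and "arrived s \<subseteq> V"
    and bounded: "\<forall>A\<in>act s. dist_bounded pos (yv s) A" and y: "\<forall>S. 0 \<le> yv s S"
    and support: "\<forall>S. yv s S \<noteq> 0 \<longrightarrow> S \<noteq> {} \<and> (\<exists>A\<in>act s. S \<subseteq> A)"
    using inv unfolding gd_invariant_def by auto
  have "?A \<subseteq> V" "?B \<subseteq> V"
    using blocks partition_onD1[OF part] \<open>arrived s \<subseteq> V\<close> by blast+
  have "dist (pos u) (pos v) \<le> load V (yv s) u v"
    using tight unfolding tight_def cost_def by simp
  also have "\<dots> \<le> reach (yv s) ?A u + reach (yv s) ?B v"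
    using \<open>finite V\<close> partition_onD2[OF part] y support blocks \<open>?A \<subseteq> V\<close> \<open>?B \<subseteq> V\<close>
    by (intro load_le_reach) auto
  finally show ?thesis
    using \<open>finite V\<close> \<open>?A \<subseteq> V\<close> \<open>?B \<subseteq> V\<close> finite_subset blocks y support bounded
    by (intro dist_bounded_merge) auto
qed

lemma paired_off_after_merge:
  assumes inv: "gd_invariant V pos sg s" and "finite V"
    and tight: "tight V pos atime sg s u v"
    and S: "S = actset s u \<union> actset s v"
    and pairs: "\<forall>(a, b)\<in>P. a \<in> S \<and> b \<in> S \<and> a \<noteq> b \<and> sg a = - sg b \<and> free s a \<and> free s b"
    and pairs_disjoint: "\<forall>(a, b)\<in>P. \<forall>(c, d)\<in>P. (a, b) \<noteq> (c, d) \<longrightarrow> {a, b} \<inter> {c, d} = {}"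
    and s': "s' = s\<lparr>act := insert S (act s - {actset s u, actset s v}),
                   matches := matches s \<union> {(a, b, clock s) | a b. (a, b) \<in> P}\<rparr>"
    and maximal: "\<forall>a\<in>S. \<forall>b\<in>S. a \<noteq> b \<longrightarrow> sg a = - sg b \<longrightarrow> \<not> (free s' a \<and> free s' b)"
  shows "\<forall>C\<in>act s'. paired_off sg (free s') C"
proof -
  have "arrived s \<subseteq> V" and part: "partition_on (arrived s) (act s)"
    and paired: "\<forall>A\<in>act s. paired_off sg (free s) A"
    using inv unfolding gd_invariant_def by auto
  define A where "A = actset s u"
  define B where "B = actset s v"
  define R where "R = fst ` P \<union> snd ` P"
  have A: "A \<in> act s" "u \<in> A" and B: "B \<in> act s" "v \<in> B" and disj: "A \<inter> B = {}"
    using tight_edge_blocks[OF inv tight] unfolding A_def B_def by auto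
  have "A \<subseteq> V" "B \<subseteq> V"
    using A B partition_onD1[OF part] \<open>arrived s \<subseteq> V\<close> by blast+
  then have fin: "finite A" "finite B" using \<open>finite V\<close> finite_subset by auto
  have S_AB: "S = A \<union> B" using S A_def B_def by simp
  have free': "free s' = (\<lambda>x. free s x \<and> x \<notin> R)"
    unfolding s' R_def by (rule ext, rule free_after_matching)
  have "P \<subseteq> S \<times> S" using pairs by auto
  then have "finite P" using fin S_AB finite_subset by blast
  have R: "R \<subseteq> {x\<in>A \<union> B. free s x}" "even (card R)" "(\<Sum>x\<in>R. sg x) = 0"
    using pairs card_sum_matched_endpoints[OF \<open>finite P\<close> _ pairs_disjoint, of sg]
    unfolding R_def S_AB by (auto simp: case_prod_beta)
  have "paired_off sg (free s') (A \<union> B)"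
    unfolding free' using fin disj paired A B R maximal S_AB free'
    by (intro paired_off_merge) auto
  moreover have "paired_off sg (free s') C" if "C \<in> act s - {A, B}" for C
  proof -
    have "C \<inter> (A \<union> B) = {}"
      using that A B partition_onD2[OF part] disjointD by blast
    then have "paired_off sg (free s') C = paired_off sg (free s) C"
      unfolding free' using R(1) by (intro paired_off_cong) blast
    then show ?thesis using that paired by auto
  qed
  moreover have "act s' = insert (A \<union> B) (act s - {A, B})"
    using s' S_AB A_def B_def by simp
  ultimately show ?thesis by simp
qed

lemma gd_invariant_merge:
  assumes inv: "gd_invariant V pos sg s" and "finite V"
    and tight: "tight V pos atime sg s u v"
    and S: "S = actset s u \<union> actset s v"
    and pairs: "\<forall>(a, b)\<in>P. a \<in> S \<and> b \<in> S \<and> a \<noteq> b \<and> sg a = - sg b \<and> free s a \<and> free s b"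
    and pairs_disjoint: "\<forall>(a, b)\<in>P. \<forall>(c, d)\<in>P. (a, b) \<noteq> (c, d) \<longrightarrow> {a, b} \<inter> {c, d} = {}"
    and s': "s' = s\<lparr>act := insert S (act s - {actset s u, actset s v}),
                   matches := matches s \<union> {(a, b, clock s) | a b. (a, b) \<in> P}\<rparr>"
    and maximal: "\<forall>a\<in>S. \<forall>b\<in>S. a \<noteq> b \<longrightarrow> sg a = - sg b \<longrightarrow> \<not> (free s' a \<and> free s' b)"
  shows "gd_invariant V pos sg s'"
proof -
  have "arrived s \<subseteq> V" and part: "partition_on (arrived s) (act s)"
    and matched: "\<forall>a b t. (a, b, t) \<in> matches s \<longrightarrow> (\<exists>A\<in>act s. a \<in> A \<and> b \<in> A)"
    and bounded: "\<forall>A\<in>act s. dist_bounded pos (yv s) A"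
    and y: "\<forall>S. 0 \<le> yv s S"
    and support: "\<forall>S. yv s S \<noteq> 0 \<longrightarrow> S \<noteq> {} \<and> (\<exists>A\<in>act s. S \<subseteq> A) \<and> 1 \<le> sur V sg S"
    using inv unfolding gd_invariant_def by auto
  define A where "A = actset s u"
  define B where "B = actset s v"
  have A: "A \<in> act s" and B: "B \<in> act s"
    using tight_edge_blocks[OF inv tight] unfolding A_def B_def by auto
  have act': "act s' = insert (A \<union> B) (act s - {A, B})"
    using s' S A_def B_def by simp
  have "yv s' = yv s" "arrived s' = arrived s" using s' by simp_all
  have "dist_bounded pos (yv s) (A \<union> B)"
    unfolding A_def B_def using inv \<open>finite V\<close> tight by (rule dist_bounded_tight_merge)
  then have bounded': "\<forall>C\<in>act s'. dist_bounded pos (yv s') C"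
    using bounded unfolding act' \<open>yv s' = yv s\<close> by blast
  have coarser: "\<exists>C'\<in>act s'. T \<subseteq> C'" if "T \<subseteq> C" "C \<in> act s" for T C
    using that act' by (cases "C \<in> {A, B}") auto
  show ?thesis
    unfolding gd_invariant_def
  proof (intro conjI)
    show "arrived s' \<subseteq> V" "\<forall>S. 0 \<le> yv s' S"
      using \<open>arrived s \<subseteq> V\<close> y \<open>arrived s' = arrived s\<close> \<open>yv s' = yv s\<close> by simp_all
    show "partition_on (arrived s') (act s')"
      unfolding act' \<open>arrived s' = arrived s\<close> by (rule partition_on_merge[OF part A B])
    show "\<forall>a b t. (a, b, t) \<in> matches s' \<longrightarrow> (\<exists>C\<in>act s'. a \<in> C \<and> b \<in> C)"
    proof (intro allI impI)
      fix a b t assume "(a, b, t) \<in> matches s'"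
      then consider "(a, b, t) \<in> matches s" | "(a, b) \<in> P" using s' by auto
      then show "\<exists>C\<in>act s'. a \<in> C \<and> b \<in> C"
      proof cases
        case 1
        then obtain C where "C \<in> act s" "a \<in> C" "b \<in> C" using matched by blast
        then show ?thesis using coarser[of "{a, b}" C] by simp
      next
        case 2
        then have "a \<in> A \<union> B" "b \<in> A \<union> B" using pairs S A_def B_def by auto
        then show ?thesis unfolding act' by (intro bexI[of _ "A \<union> B"]) simp_all
      qed
    qed
    show "\<forall>C\<in>act s'. paired_off sg (free s') C \<and> dist_bounded pos (yv s') C"
      using paired_off_after_merge[OF assms] bounded' by blast
    show "\<forall>T. yv s' T \<noteq> 0 \<longrightarrow> T \<noteq> {} \<and> (\<exists>C\<in>act s'. T \<subseteq> C) \<and> 1 \<le> sur V sg T"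
    proof (intro allI impI)
      fix T assume "yv s' T \<noteq> 0"
      then have "T \<noteq> {}" "1 \<le> sur V sg T" "\<exists>C\<in>act s. T \<subseteq> C"
        using support \<open>yv s' = yv s\<close> by auto
      then show "T \<noteq> {} \<and> (\<exists>C\<in>act s'. T \<subseteq> C) \<and> 1 \<le> sur V sg T"
        using coarser by blast
    qed
  qed
qed

lemma gd_invariant_step:
  assumes "gd_step V pos atime sg s s'" "gd_invariant V pos sg s" "instance_ok V pos atime sg"
  shows "gd_invariant V pos sg s'"
  using assms(1)
proof cases
  case arrive
  then show ?thesis using gd_invariant_arrive[OF assms(2)] by simp
next
  case merge
  have "finite V" using assms(3) unfolding instance_ok_def by blast
  then show ?thesis using gd_invariant_merge[OF assms(2) _ merge] by simp
next
  case advance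
  then show ?thesis using gd_invariant_advance[OF assms(2,3)] by simp
qed

lemma gd_invariant_reachable:
  assumes "instance_ok V pos atime sg" "(gd_step V pos atime sg)\<^sup>*\<^sup>* gd_init s"
  shows "gd_invariant V pos sg s"
  using assms(2)
proof (induction rule: rtranclp_induct)
  case base
  then show ?case by (rule gd_invariant_init)
next
  case (step s s')
  then show ?case using gd_invariant_step assms(1) by blast
qed

theorem lemma7:
  fixes V :: "'r set" and pos :: "'r \<Rightarrow> 'p::metric_space"
    and atime :: "'r \<Rightarrow> real" and sg :: "'r \<Rightarrow> int" and s :: "'r gd_state"
  assumes "instance_ok V pos atime sg"
    and "(gd_step V pos atime sg)\<^sup>*\<^sup>* gd_init s"
    and "arrived s = V" and "\<forall>u\<in>V. \<not> free s u"
    and "clock s = Max {t. \<exists>a b. (a, b, t) \<in> matches s}"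
    and "(u, v, t) \<in> matches s"
  shows "dist (pos u) (pos v) \<le> 2 * (\<Sum>S\<in>Pow V. sur V sg S * yv s S)"
proof -
  \<comment> \<open>The bound holds in every reachable state.\<close>
  have inv: "gd_invariant V pos sg s"
    using assms(1,2) by (rule gd_invariant_reachable)
  then obtain A where A: "A \<in> act s" "u \<in> A" "v \<in> A"
    using assms(6) unfolding gd_invariant_def by blast
  have "A \<subseteq> V"
    using A inv partition_onD1 unfolding gd_invariant_def by blast
  have "dist (pos u) (pos v) \<le> dual_dist (yv s) A u v"
    using A inv unfolding gd_invariant_def dist_bounded_def by blast
  also have "\<dots> \<le> 2 * (\<Sum>S\<in>Pow V. sur V sg S * yv s S)"
    using assms(1) \<open>A \<subseteq> V\<close> inv sur_nonneg unfolding instance_ok_def gd_invariant_def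
    by (intro dual_dist_le_weighted_sum) auto
  finally show ?thesis .
qed

end
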